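(* Let $\mu$ be a monotone system over $\{0,1\}^V$ and $\theta\in(0,1)$. Then the lifted distribution $\pi$ is a monotone system over $\{0,1,\star\}^V$, and consequently the Glauber dynamics $P_{\pi\text{-GD}}$ on $\pi$ is stochastically monotone.
   Context: Monotone system (over $\{0,1\}^V$): for every $v$ and all feasible (positive probability) $\sigma\preceq\tau$ in $\{0,1\}^{V\setminus\{v\}}$ (coordinatewise), $\mu^\sigma_v(1)\le\mu^\tau_v(1)$, $\mu^\sigma_v$ being the conditional marginal. $\mathsf{lift}:\{0,1\}^V\to\{0,1,\star\}^V$ is random: independently per coordinate, $0\mapsto0$, $1\mapsto\star$ w.p. $1-\theta$, $1\mapsto1$ w.p. $\theta$; $\pi$ is the law of $\mathsf{lift}(X)$ for $X\sim\mu$, support $\Omega(\pi)$. Order $0<1<\star$ and coordinatewise partial order on $\{0,1,\star\}^V$. A distribution $\pi$ over $\{0,1,\star\}^V$ is a monotone system if for every $i\in V$ and all feasible comparable $\sigma\preceq\tau$ in $\{0,1,\star\}^{V\setminus\{i\}}$, there is a coupling $(x,y)$ of the conditional marginals $\pi^\sigma_i,\pi^\tau_i$ with $x\le y$ a.s. $P_{\pi\text{-GD}}$: pick $v$ uniformly, resample $X_v$ from $\pi$ given $X_{V\setminus\{v\}}$. A chain $P$ on $\Omega(\pi)$ is stochastically monotone if $Pf$ is increasing for every increasing $f:\Omega(\pi)\to\mathbb R_{\ge0}$ (increasing: $X\preceq Y\Rightarrow f(X)\le f(Y)$). *)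

theory Defs
  imports "HOL-Probability.Probability"
begin

datatype tri = Zero | One | Star

fun tri_rank :: "tri \<Rightarrow> nat" where
  "tri_rank Zero = 0" | "tri_rank One = 1" | "tri_rank Star = 2"

instantiation tri :: linorder
begin
definition less_eq_tri :: "tri \<Rightarrow> tri \<Rightarrow> bool" where
  "less_eq_tri a b \<longleftrightarrow> tri_rank a \<le> tri_rank b"
definition less_tri :: "tri \<Rightarrow> tri \<Rightarrow> bool" where
  "less_tri a b \<longleftrightarrow> tri_rank a < tri_rank b"
instance
proof
  fix x y z :: tri
  show "(x < y) = (x \<le> y \<and> \<not> y \<le> x)" by (auto simp: less_eq_tri_def less_tri_def)
  show "x \<le> x" by (simp add: less_eq_tri_def)
  show "x \<le> y \<Longrightarrow> y \<le> z \<Longrightarrow> x \<le> z" by (simp add: less_eq_tri_def)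
  show "x \<le> y \<Longrightarrow> y \<le> x \<Longrightarrow> x = y"
    by (cases x; cases y; simp add: less_eq_tri_def)
  show "x \<le> y \<or> y \<le> x" by (auto simp: less_eq_tri_def)
qed
end

text \<open>A boundary condition sigma on V - {i} is represented by a full configuration whose
  value at i is ignored.\<close>

definition agree_set :: "'v \<Rightarrow> ('v \<Rightarrow> 'a) \<Rightarrow> ('v \<Rightarrow> 'a) set" where
  "agree_set i \<sigma> = {x. \<forall>u. u \<noteq> i \<longrightarrow> x u = \<sigma> u}"

definition feasible :: "('v \<Rightarrow> 'a) pmf \<Rightarrow> 'v \<Rightarrow> ('v \<Rightarrow> 'a) \<Rightarrow> bool" where
  "feasible p i \<sigma> \<longleftrightarrow> measure_pmf.prob p (agree_set i \<sigma>) > 0"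

definition cond_marg :: "('v \<Rightarrow> 'a) pmf \<Rightarrow> 'v \<Rightarrow> ('v \<Rightarrow> 'a) \<Rightarrow> 'a pmf" where
  "cond_marg p i \<sigma> = map_pmf (\<lambda>x. x i) (cond_pmf p (agree_set i \<sigma>))"

definition le_off :: "'v \<Rightarrow> ('v \<Rightarrow> 'a::order) \<Rightarrow> ('v \<Rightarrow> 'a) \<Rightarrow> bool" where
  "le_off i \<sigma> \<tau> \<longleftrightarrow> (\<forall>u. u \<noteq> i \<longrightarrow> \<sigma> u \<le> \<tau> u)"

definition monotone_system_bin :: "('v \<Rightarrow> bool) pmf \<Rightarrow> bool" where
  "monotone_system_bin \<mu> \<longleftrightarrow>
     (\<forall>v \<sigma> \<tau>. feasible \<mu> v \<sigma> \<and> feasible \<mu> v \<tau> \<and> le_off v \<sigma> \<tau> \<longrightarrow>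
        pmf (cond_marg \<mu> v \<sigma>) True \<le> pmf (cond_marg \<mu> v \<tau>) True)"

definition monotone_system_tri :: "('v \<Rightarrow> tri) pmf \<Rightarrow> bool" where
  "monotone_system_tri \<pi> \<longleftrightarrow>
     (\<forall>i \<sigma> \<tau>. feasible \<pi> i \<sigma> \<and> feasible \<pi> i \<tau> \<and> le_off i \<sigma> \<tau> \<longrightarrow>
        (\<exists>c :: (tri \<times> tri) pmf.
            map_pmf fst c = cond_marg \<pi> i \<sigma> \<and> map_pmf snd c = cond_marg \<pi> i \<tau> \<and>
            (\<forall>(x, y) \<in> set_pmf c. x \<le> y)))"

definition lift_pmf :: "real \<Rightarrow> ('v::finite \<Rightarrow> bool) \<Rightarrow> ('v \<Rightarrow> tri) pmf" where
  "lift_pmf \<theta> X = Pi_pmf UNIV Zero (\<lambda>v. if X v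
      then map_pmf (\<lambda>b. if b then One else Star) (bernoulli_pmf \<theta>)
      else return_pmf Zero)"

definition lifted :: "real \<Rightarrow> ('v::finite \<Rightarrow> bool) pmf \<Rightarrow> ('v \<Rightarrow> tri) pmf" where
  "lifted \<theta> \<mu> = bind_pmf \<mu> (lift_pmf \<theta>)"

definition glauber :: "('v::finite \<Rightarrow> 'a) pmf \<Rightarrow> ('v \<Rightarrow> 'a) \<Rightarrow> ('v \<Rightarrow> 'a) pmf" where
  "glauber \<pi> X = bind_pmf (pmf_of_set UNIV)
      (\<lambda>v. map_pmf (\<lambda>a. X(v := a)) (cond_marg \<pi> v X))"

definition stoch_monotone :: "('c::order) set \<Rightarrow> ('c \<Rightarrow> 'c pmf) \<Rightarrow> bool" where
  "stoch_monotone \<Omega> P \<longleftrightarrow>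
     (\<forall>f :: 'c \<Rightarrow> real.
        (\<forall>x\<in>\<Omega>. f x \<ge> 0) \<and> (\<forall>x\<in>\<Omega>. \<forall>y\<in>\<Omega>. x \<le> y \<longrightarrow> f x \<le> f y) \<longrightarrow>
        (\<forall>x\<in>\<Omega>. \<forall>y\<in>\<Omega>. x \<le> y \<longrightarrow>
           measure_pmf.expectation (P x) f \<le> measure_pmf.expectation (P y) f))"

end

(* Conditioning the lifted measure on the spins off a site i sees the boundary sigma only
   through unlift sigma: the weight of the lifted spins off i cancels, so the conditional spin
   at i is the lift of the conditional Bernoulli spin of mu at i given unlift sigma.
   Monotonicity of mu orders these Bernoulli parameters, Bernoulli laws with ordered
   parameters are coupled monotonically by thinning, and lifting a spin is monotone.
   For the Glauber dynamics, updating the same site in both copies through such a coupling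
   gives a monotone coupling of the one-step laws, along which expectations of increasing
   functions compare. *)

theory Submission
  imports Defs
begin

lemma UNIV_tri: "(UNIV :: tri set) = {Zero, One, Star}"
  using tri.exhaust by auto

instance tri :: finite
  by standard (simp add: UNIV_tri)

lemma tri_le_Zero_iff: "t \<le> Zero \<longleftrightarrow> t = Zero"
  by (cases t) (simp_all add: less_eq_tri_def)

lemma prob_agree_set:
  fixes p :: "('v \<Rightarrow> 'a::finite) pmf"
  shows "measure_pmf.prob p (agree_set i \<sigma>) = (\<Sum>a\<in>UNIV. pmf p (\<sigma>(i := a)))"
proof -
  have "agree_set i \<sigma> = range (\<lambda>a. \<sigma>(i := a))"
    by (auto simp: agree_set_def fun_eq_iff intro!: range_eqI[where x = "_ i"])
  moreover have "inj (\<lambda>a. \<sigma>(i := a))"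
    by (auto intro: injI dest: fun_upd_eqD)
  ultimately show ?thesis
    by (simp add: measure_measure_pmf_finite sum.reindex)
qed

lemma pmf_cond_marg:
  assumes "feasible p i \<sigma>"
  shows "pmf (cond_marg p i \<sigma>) a = pmf p (\<sigma>(i := a)) / measure_pmf.prob p (agree_set i \<sigma>)"
proof -
  let ?A = "agree_set i \<sigma>"
  have ne: "set_pmf p \<inter> ?A \<noteq> {}"
    using assms unfolding feasible_def by (metis measure_pmf_zero_iff disjnt_def less_irrefl)
  have "(\<lambda>x. x i) -` {a} \<inter> set_pmf (cond_pmf p ?A) = {\<sigma>(i := a)} \<inter> set_pmf (cond_pmf p ?A)"
    unfolding set_cond_pmf[OF ne] by (auto simp: agree_set_def fun_eq_iff)
  then have "measure (cond_pmf p ?A) ((\<lambda>x. x i) -` {a}) = measure (cond_pmf p ?A) {\<sigma>(i := a)}"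
    by (metis measure_Int_set_pmf)
  moreover have "\<sigma>(i := a) \<in> ?A"
    by (simp add: agree_set_def)
  ultimately show ?thesis
    by (simp add: cond_marg_def pmf_map measure_pmf_single pmf_cond[OF ne])
qed

lemma feasible_if_in_set_pmf:
  assumes "x \<in> set_pmf p"
  shows "feasible p i x"
  unfolding feasible_def by (rule measure_pmf_posI[OF assms]) (simp add: agree_set_def)

lemma fun_upd_in_set_pmf_cond_marg:
  assumes "x \<in> set_pmf p" "a \<in> set_pmf (cond_marg p i x)"
  shows "x(i := a) \<in> set_pmf p"
proof -
  have ne: "set_pmf p \<inter> agree_set i x \<noteq> {}"
    using assms(1) by (auto simp: agree_set_def)
  from assms(2) obtain z where z: "z \<in> set_pmf p" "z \<in> agree_set i x" and "a = z i"
    unfolding cond_marg_def by (auto simp: set_cond_pmf[OF ne])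
  then have "x(i := a) = z"
    by (auto simp: agree_set_def fun_eq_iff)
  with z show ?thesis by simp
qed

lemma integral_measure_pmf_if_eq:
  "(\<integral>x. (if x = c then a else 0) \<partial>measure_pmf p) = pmf p c * (a :: real)"
proof -
  have "(\<integral>x. (if x = c then a else 0) \<partial>measure_pmf p) = (\<integral>x. indicator {c} x * a \<partial>measure_pmf p)"
    by (intro Bochner_Integration.integral_cong) auto
  then show ?thesis by (simp add: measure_pmf_single)
qed

lemma rel_pmf_iff_coupling:
  "rel_pmf R p q \<longleftrightarrow> (\<exists>c. map_pmf fst c = p \<and> map_pmf snd c = q \<and> (\<forall>(x, y)\<in>set_pmf c. R x y))"
  by (auto simp: rel_pmf.simps)

lemma expectation_mono_rel_pmf:
  fixes f g :: "'a::finite \<Rightarrow> real"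
  assumes "rel_pmf R p q" and "\<And>x y. R x y \<Longrightarrow> f x \<le> g y"
  shows "measure_pmf.expectation p f \<le> measure_pmf.expectation q g"
proof -
  obtain pq where R: "\<And>x y. (x, y) \<in> set_pmf pq \<Longrightarrow> R x y"
    and p: "map_pmf fst pq = p" and q: "map_pmf snd pq = q"
    using assms(1) by (auto elim: rel_pmf.cases)
  have "AE z in pq. f (fst z) \<le> g (snd z)"
    using R assms(2) by (auto simp: AE_measure_pmf_iff)
  then have "measure_pmf.expectation pq (\<lambda>z. f (fst z)) \<le> measure_pmf.expectation pq (\<lambda>z. g (snd z))"
    by (intro integral_mono_AE integrable_measure_pmf_finite) simp_all
  then show ?thesis
    unfolding p[symmetric] q[symmetric] integral_map_pmf .
qed

lemma bernoulli_pmf_pmf_True: "bernoulli_pmf (pmf p True) = p"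
proof (rule pmf_eqI)
  fix b
  show "pmf (bernoulli_pmf (pmf p True)) b = pmf p b"
    by (cases b) (simp_all add: pmf_le_1 pmf_False_conv_True)
qed

lemma rel_pmf_le_bernoulli:
  assumes "0 \<le> p" "p \<le> q" "q \<le> 1"
  shows "rel_pmf (\<le>) (bernoulli_pmf p) (bernoulli_pmf q)"
proof -
  define r where "r = p / q" \<comment> \<open>if q = 0 then r = 0, and still q * r = p as p = 0\<close>
  have r: "0 \<le> r" "r \<le> 1" "q * r = p"
    using assms by (cases "q = 0", auto simp: r_def divide_le_eq_1)
  have thinning: "bernoulli_pmf p =
      bind_pmf (bernoulli_pmf q) (\<lambda>b. if b then bernoulli_pmf r else return_pmf False)"
  proof (rule pmf_eqI)
    fix b
    show "pmf (bernoulli_pmf p) b =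
        pmf (bind_pmf (bernoulli_pmf q) (\<lambda>b. if b then bernoulli_pmf r else return_pmf False)) b"
      using assms r by (cases b) (simp_all add: pmf_bind algebra_simps)
  qed
  have "rel_pmf (\<le>)
      (bind_pmf (bernoulli_pmf q) (\<lambda>b. if b then bernoulli_pmf r else return_pmf False))
      (bind_pmf (bernoulli_pmf q) return_pmf)"
    by (rule rel_pmf_bindI[where R = "(=)"]) (auto simp: pmf.rel_eq rel_pmf_return_pmf2)
  then show ?thesis
    by (simp add: thinning bind_return_pmf')
qed

lemma rel_pmf_le_bool:
  fixes p q :: "bool pmf"
  assumes "pmf p True \<le> pmf q True"
  shows "rel_pmf (\<le>) p q"
  using rel_pmf_le_bernoulli[OF pmf_nonneg assms pmf_le_1] by (simp add: bernoulli_pmf_pmf_True)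

definition unlift :: "('v \<Rightarrow> tri) \<Rightarrow> 'v \<Rightarrow> bool" where
  "unlift y = (\<lambda>u. y u \<noteq> Zero)"

definition lift_spin :: "real \<Rightarrow> bool \<Rightarrow> tri pmf" where
  "lift_spin \<theta> b =
     (if b then map_pmf (\<lambda>s. if s then One else Star) (bernoulli_pmf \<theta>) else return_pmf Zero)"

lemma lift_pmf_eq_Pi_pmf: "lift_pmf \<theta> X = Pi_pmf UNIV Zero (\<lambda>v. lift_spin \<theta> (X v))"
  by (simp add: lift_pmf_def lift_spin_def)

fun spin_weight :: "real \<Rightarrow> tri \<Rightarrow> real" where
  "spin_weight \<theta> Zero = 1" | "spin_weight \<theta> One = \<theta>" | "spin_weight \<theta> Star = 1 - \<theta>"

lemma spin_weight_pos: "0 < \<theta> \<Longrightarrow> \<theta> < 1 \<Longrightarrow> 0 < spin_weight \<theta> t"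
  by (cases t) auto

lemma pmf_lift_spin:
  assumes "0 \<le> \<theta>" "\<theta> \<le> 1"
  shows "pmf (lift_spin \<theta> b) t = (if b = (t \<noteq> Zero) then spin_weight \<theta> t else 0)"
proof -
  have "{s. s} = {True}" "{s. \<not> s} = {False}" by auto
  then show ?thesis
    using assms by (cases b; cases t) (simp_all add: lift_spin_def pmf_map vimage_def measure_pmf_single)
qed

lemma pmf_lift_pmf:
  assumes "0 \<le> \<theta>" "\<theta> \<le> 1"
  shows "pmf (lift_pmf \<theta> X) y = (if X = unlift y then \<Prod>v\<in>UNIV. spin_weight \<theta> (y v) else 0)"
proof (cases "X = unlift y")
  case True
  then show ?thesis
    by (simp add: lift_pmf_eq_Pi_pmf pmf_Pi pmf_lift_spin[OF assms] unlift_def)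
next
  case False
  then obtain v where "X v \<noteq> (y v \<noteq> Zero)" by (auto simp: unlift_def fun_eq_iff)
  then have "(\<Prod>u\<in>UNIV. pmf (lift_spin \<theta> (X u)) (y u)) = 0"
    by (intro prod_zero bexI[of _ v]) (simp_all add: pmf_lift_spin[OF assms])
  then show ?thesis
    using False by (simp add: lift_pmf_eq_Pi_pmf pmf_Pi)
qed

lemma pmf_lifted:
  assumes "0 \<le> \<theta>" "\<theta> \<le> 1"
  shows "pmf (lifted \<theta> \<mu>) y = pmf \<mu> (unlift y) * (\<Prod>v\<in>UNIV. spin_weight \<theta> (y v))"
  by (simp add: lifted_def pmf_bind pmf_lift_pmf[OF assms] integral_measure_pmf_if_eq)

lemma pmf_bind_lift_spin:
  assumes "0 \<le> \<theta>" "\<theta> \<le> 1"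
  shows "pmf (bind_pmf p (lift_spin \<theta>)) t = pmf p (t \<noteq> Zero) * spin_weight \<theta> t"
  by (simp add: pmf_bind pmf_lift_spin[OF assms] integral_measure_pmf_if_eq)

lemma pmf_lifted_fun_upd:
  assumes "0 \<le> \<theta>" "\<theta> \<le> 1"
  shows "pmf (lifted \<theta> \<mu>) (\<sigma>(i := t)) =
    pmf \<mu> ((unlift \<sigma>)(i := t \<noteq> Zero)) * spin_weight \<theta> t * (\<Prod>v\<in>-{i}. spin_weight \<theta> (\<sigma> v))"
proof -
  have "unlift (\<sigma>(i := t)) = (unlift \<sigma>)(i := t \<noteq> Zero)"
    by (auto simp: unlift_def)
  moreover have "(\<Prod>v\<in>UNIV. spin_weight \<theta> ((\<sigma>(i := t)) v)) =
      spin_weight \<theta> t * (\<Prod>v\<in>-{i}. spin_weight \<theta> (\<sigma> v))"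
    by (simp add: prod.remove[of UNIV i] Compl_eq_Diff_UNIV)
  ultimately show ?thesis
    by (simp add: pmf_lifted[OF assms])
qed

lemma prob_agree_set_lifted:
  assumes "0 \<le> \<theta>" "\<theta> \<le> 1"
  shows "measure_pmf.prob (lifted \<theta> \<mu>) (agree_set i \<sigma>) =
    (\<Prod>v\<in>-{i}. spin_weight \<theta> (\<sigma> v)) * measure_pmf.prob \<mu> (agree_set i (unlift \<sigma>))"
  by (simp add: prob_agree_set UNIV_tri UNIV_bool pmf_lifted_fun_upd[OF assms] algebra_simps)

lemma cond_marg_lifted:
  fixes \<mu> :: "('v::finite \<Rightarrow> bool) pmf"
  assumes "0 < \<theta>" "\<theta> < 1" and feasible: "feasible (lifted \<theta> \<mu>) i \<sigma>"
  shows "feasible \<mu> i (unlift \<sigma>)"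
    and "cond_marg (lifted \<theta> \<mu>) i \<sigma> = bind_pmf (cond_marg \<mu> i (unlift \<sigma>)) (lift_spin \<theta>)"
proof -
  have \<theta>: "0 \<le> \<theta>" "\<theta> \<le> 1" using assms by auto
  define K where "K = (\<Prod>v\<in>-{i}. spin_weight \<theta> (\<sigma> v))"
  define M where "M = measure_pmf.prob \<mu> (agree_set i (unlift \<sigma>))"
  have "0 < K"
    unfolding K_def using spin_weight_pos[OF assms(1,2)] by (intro prod_pos) auto
  moreover have "0 < K * M"
    using feasible by (simp add: feasible_def prob_agree_set_lifted[OF \<theta>] K_def M_def)
  ultimately have "0 < M"
    by (simp add: zero_less_mult_iff)
  then show feasible_unlift: "feasible \<mu> i (unlift \<sigma>)"
    by (simp add: feasible_def M_def)
  show "cond_marg (lifted \<theta> \<mu>) i \<sigma> = bind_pmf (cond_marg \<mu> i (unlift \<sigma>)) (lift_spin \<theta>)"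
  proof (rule pmf_eqI)
    fix t
    show "pmf (cond_marg (lifted \<theta> \<mu>) i \<sigma>) t = pmf (bind_pmf (cond_marg \<mu> i (unlift \<sigma>)) (lift_spin \<theta>)) t"
      using \<open>0 < K\<close>
      by (simp add: pmf_cond_marg[OF feasible] pmf_cond_marg[OF feasible_unlift]
          pmf_lifted_fun_upd[OF \<theta>] prob_agree_set_lifted[OF \<theta>] pmf_bind_lift_spin[OF \<theta>]
          flip: K_def M_def)
  qed
qed

lemma le_off_unlift:
  assumes "le_off i \<sigma> \<tau>"
  shows "le_off i (unlift \<sigma>) (unlift \<tau>)"
  unfolding le_off_def unlift_def le_bool_def
proof (intro allI impI)
  fix u
  assume "u \<noteq> i" "\<sigma> u \<noteq> Zero"
  then show "\<tau> u \<noteq> Zero"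
    using assms tri_le_Zero_iff[of "\<sigma> u"] by (auto simp: le_off_def)
qed

lemma rel_pmf_lift_spin:
  assumes "b \<le> b'"
  shows "rel_pmf (\<le>) (lift_spin \<theta> b) (lift_spin \<theta> b')"
proof (cases "b = b'")
  case True
  then show ?thesis by (simp add: rel_pmf_reflI)
next
  case False
  then have "\<not> b" using assms by auto
  then show ?thesis
    by (simp add: lift_spin_def rel_pmf_return_pmf1 less_eq_tri_def)
qed

lemma monotone_system_tri_iff_rel_pmf:
  "monotone_system_tri \<pi> \<longleftrightarrow>
    (\<forall>i \<sigma> \<tau>. feasible \<pi> i \<sigma> \<and> feasible \<pi> i \<tau> \<and> le_off i \<sigma> \<tau> \<longrightarrow>
      rel_pmf (\<le>) (cond_marg \<pi> i \<sigma>) (cond_marg \<pi> i \<tau>))"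
  by (simp only: monotone_system_tri_def rel_pmf_iff_coupling)

theorem monotone_system_tri_lifted:
  assumes "monotone_system_bin \<mu>" and \<theta>: "0 < \<theta>" "\<theta> < 1"
  shows "monotone_system_tri (lifted \<theta> \<mu>)"
  unfolding monotone_system_tri_iff_rel_pmf
proof (intro allI impI, elim conjE)
  fix i \<sigma> \<tau>
  assume \<sigma>: "feasible (lifted \<theta> \<mu>) i \<sigma>" and \<tau>: "feasible (lifted \<theta> \<mu>) i \<tau>"
    and "le_off i \<sigma> \<tau>"
  have "pmf (cond_marg \<mu> i (unlift \<sigma>)) True \<le> pmf (cond_marg \<mu> i (unlift \<tau>)) True"
    using assms(1) cond_marg_lifted(1)[OF \<theta> \<sigma>] cond_marg_lifted(1)[OF \<theta> \<tau>]
      le_off_unlift[OF \<open>le_off i \<sigma> \<tau>\<close>]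
    unfolding monotone_system_bin_def by blast
  then have "rel_pmf (\<le>) (cond_marg \<mu> i (unlift \<sigma>)) (cond_marg \<mu> i (unlift \<tau>))"
    by (rule rel_pmf_le_bool)
  then show "rel_pmf (\<le>) (cond_marg (lifted \<theta> \<mu>) i \<sigma>) (cond_marg (lifted \<theta> \<mu>) i \<tau>)"
    unfolding cond_marg_lifted(2)[OF \<theta> \<sigma>] cond_marg_lifted(2)[OF \<theta> \<tau>]
    by (rule rel_pmf_bindI) (rule rel_pmf_lift_spin)
qed

lemma monotone_system_tri_rel_pmf_cond_marg:
  assumes "monotone_system_tri \<pi>" and x: "x \<in> set_pmf \<pi>" and y: "y \<in> set_pmf \<pi>" and "x \<le> y"
  shows "rel_pmf (\<le>) (cond_marg \<pi> i x) (cond_marg \<pi> i y)"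
proof -
  have "le_off i x y"
    using \<open>x \<le> y\<close> by (simp add: le_off_def le_fun_def)
  then show ?thesis
    using assms(1) feasible_if_in_set_pmf[OF x] feasible_if_in_set_pmf[OF y]
    unfolding monotone_system_tri_iff_rel_pmf by blast
qed

lemma rel_pmf_glauber:
  fixes \<pi> :: "('v::finite \<Rightarrow> 'a::order) pmf"
  assumes cond_marg_le: "\<And>i. rel_pmf (\<le>) (cond_marg \<pi> i x) (cond_marg \<pi> i y)"
    and x: "x \<in> set_pmf \<pi>" and y: "y \<in> set_pmf \<pi>" and "x \<le> y"
  shows "rel_pmf (\<lambda>x' y'. x' \<in> set_pmf \<pi> \<and> y' \<in> set_pmf \<pi> \<and> x' \<le> y') (glauber \<pi> x) (glauber \<pi> y)"
  unfolding glauber_def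
proof (rule rel_pmf_bindI[where R = "(=)"])
  fix i i' :: 'v
  assume "i = i'"
  have "rel_pmf (\<lambda>a b. x(i := a) \<in> set_pmf \<pi> \<and> y(i := b) \<in> set_pmf \<pi> \<and> x(i := a) \<le> y(i := b))
      (cond_marg \<pi> i x) (cond_marg \<pi> i y)"
  proof (rule pmf.rel_mono_strong[OF cond_marg_le])
    fix a b
    assume "a \<in> set_pmf (cond_marg \<pi> i x)" "b \<in> set_pmf (cond_marg \<pi> i y)" "a \<le> b"
    then show "x(i := a) \<in> set_pmf \<pi> \<and> y(i := b) \<in> set_pmf \<pi> \<and> x(i := a) \<le> y(i := b)"
      using fun_upd_in_set_pmf_cond_marg[OF x] fun_upd_in_set_pmf_cond_marg[OF y] \<open>x \<le> y\<close>
      by (simp add: le_fun_def)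
  qed
  then show "rel_pmf (\<lambda>x' y'. x' \<in> set_pmf \<pi> \<and> y' \<in> set_pmf \<pi> \<and> x' \<le> y')
      (map_pmf (\<lambda>a. x(i := a)) (cond_marg \<pi> i x)) (map_pmf (\<lambda>a. y(i' := a)) (cond_marg \<pi> i' y))"
    by (simp add: pmf.rel_map \<open>i = i'\<close>)
qed (simp add: pmf.rel_eq)

lemma stoch_monotone_glauber:
  fixes \<pi> :: "('v::finite \<Rightarrow> 'a::{finite, order}) pmf"
  assumes "\<And>i x y. x \<in> set_pmf \<pi> \<Longrightarrow> y \<in> set_pmf \<pi> \<Longrightarrow> x \<le> y \<Longrightarrow>
      rel_pmf (\<le>) (cond_marg \<pi> i x) (cond_marg \<pi> i y)"
  shows "stoch_monotone (set_pmf \<pi>) (glauber \<pi>)"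
  unfolding stoch_monotone_def
proof (intro allI impI ballI, elim conjE)
  fix f :: "('v \<Rightarrow> 'a) \<Rightarrow> real" and x y
  assume f_mono: "\<forall>x\<in>set_pmf \<pi>. \<forall>y\<in>set_pmf \<pi>. x \<le> y \<longrightarrow> f x \<le> f y"
    and x: "x \<in> set_pmf \<pi>" and y: "y \<in> set_pmf \<pi>" and "x \<le> y"
  show "measure_pmf.expectation (glauber \<pi> x) f \<le> measure_pmf.expectation (glauber \<pi> y) f"
    using rel_pmf_glauber[OF assms[OF x y \<open>x \<le> y\<close>] x y \<open>x \<le> y\<close>]
    by (rule expectation_mono_rel_pmf) (simp add: f_mono)
qed

theorem lemma5p1:
  fixes \<mu> :: "('v::finite \<Rightarrow> bool) pmf" and \<theta> :: real
  assumes "monotone_system_bin \<mu>"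
    and "0 < \<theta>" and "\<theta> < 1"
  shows "monotone_system_tri (lifted \<theta> \<mu>)
       \<and> stoch_monotone (set_pmf (lifted \<theta> \<mu>)) (glauber (lifted \<theta> \<mu>))"
proof
  show "monotone_system_tri (lifted \<theta> \<mu>)"
    using assms by (rule monotone_system_tri_lifted)
  then show "stoch_monotone (set_pmf (lifted \<theta> \<mu>)) (glauber (lifted \<theta> \<mu>))"
    by (intro stoch_monotone_glauber monotone_system_tri_rel_pmf_cond_marg)
qed

end
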